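(* Let $M$ be a nonsingular real symmetric $n \times n$ matrix and let $\alpha \subseteq \{1,\dots,n\}$ with $|\alpha| \geq 2$ such that every subset $\gamma \subseteq \alpha$ with $|\gamma|=2$ is a P-set of $M$. Then $\alpha$ is a P-set of $M$.
   Context: All matrices are real. For an $n\times n$ matrix $A$ and $\alpha \subseteq \{1,\dots,n\}$, $A(\alpha)$ denotes the principal submatrix obtained by deleting the rows and columns indexed by $\alpha$, and $\nu(A)$ denotes the nullity of $A$. A set $\alpha$ is a P-set of $A$ if $\nu(A(\alpha)) = \nu(A) + |\alpha|$. *)

theory Defs
  imports "Jordan_Normal_Form.Matrix_Kernel" "Jordan_Normal_Form.DL_Submatrix"
begin

text \<open>Indices are 0-based: an n x n matrix has indices {0..<n}.\<close>

definition nullity :: "real mat \<Rightarrow> nat" where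
  "nullity A = kernel_dim A"

definition principal_del :: "real mat \<Rightarrow> nat set \<Rightarrow> real mat" where
  "principal_del A \<alpha> = submatrix A ({0..<dim_row A} - \<alpha>) ({0..<dim_row A} - \<alpha>)"

definition is_P_set :: "real mat \<Rightarrow> nat set \<Rightarrow> bool" where
  "is_P_set A \<alpha> \<longleftrightarrow> nullity (principal_del A \<alpha>) = nullity A + card \<alpha>"

end

theory Submission
  imports Defs
begin

text \<open>For nonsingular \<open>M\<close> with inverse \<open>B\<close>, the complementary nullity theorem gives
  \<open>\<nu>(M(\<alpha>)) = \<nu>(B[\<alpha>,\<alpha>])\<close>, where \<open>B[\<alpha>,\<alpha>]\<close> is the principal submatrix of \<open>B\<close> on the rows and
  columns in \<open>\<alpha>\<close>: the maps \<open>v \<mapsto> M[\<alpha>,\<alpha>\<^sup>c] v\<close> and \<open>w \<mapsto> B[\<alpha>\<^sup>c,\<alpha>] w\<close> are mutually inverse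
  between the two kernels, by the block form of \<open>MB = BM = I\<close>. Since \<open>\<nu>(M) = 0\<close>, the set \<open>\<alpha>\<close>
  is a P-set iff \<open>\<nu>(B[\<alpha>,\<alpha>]) = |\<alpha>|\<close>, i.e. iff \<open>B[\<alpha>,\<alpha>] = 0\<close>. This is a condition on the
  entries \<open>B\<^sub>i\<^sub>j\<close> with \<open>i, j \<in> \<alpha>\<close>, and each such pair lies in a two-element subset of \<open>\<alpha>\<close>.\<close>

lemma bij_betw_pick: "finite S \<Longrightarrow> bij_betw (pick S) {..<card S} S"
proof (rule bij_betwI')
  fix x y assume "x \<in> {..<card S}" "y \<in> {..<card S}"
  then show "(pick S x = pick S y) = (x = y)"
    by (metis lessThan_iff nat_neq_iff pick_mono_le)
next
  fix x assume "x \<in> {..<card S}"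
  then show "pick S x \<in> S" by (simp add: pick_in_set_le)
next
  fix y assume "finite S" "y \<in> S"
  then have "card {a\<in>S. a < y} < card S"
    by (intro psubset_card_mono) auto
  then show "\<exists>x\<in>{..<card S}. y = pick S x"
    using pick_card_in_set[OF \<open>y \<in> S\<close>] by (intro bexI[of _ "card {a\<in>S. a < y}"]) simp_all
qed

lemma sum_pick:
  assumes "finite S"
  shows "(\<Sum>t<card S. f (pick S t)) = (\<Sum>k\<in>S. f k)"
  using sum.reindex_bij_betw[OF bij_betw_pick[OF assms]] .

lemma submatrix_carrier_mat:
  assumes X: "X \<in> carrier_mat nr nc" and I: "I \<subseteq> {0..<nr}" and J: "J \<subseteq> {0..<nc}"
  shows "submatrix X I J \<in> carrier_mat (card I) (card J)"
proof -
  have rows: "{i. i < dim_row X \<and> i \<in> I} = I" and cols: "{j. j < dim_col X \<and> j \<in> J} = J"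
    using X I J by auto
  have "dim_row (submatrix X I J) = card I" "dim_col (submatrix X I J) = card J"
    unfolding dim_submatrix rows cols by (rule refl)+
  then show ?thesis by (rule carrier_matI)
qed

lemma submatrix_index_pick:
  assumes X: "X \<in> carrier_mat nr nc" and I: "I \<subseteq> {0..<nr}" and J: "J \<subseteq> {0..<nc}"
    and "i < card I" "j < card J"
  shows "submatrix X I J $$ (i, j) = X $$ (pick I i, pick J j)"
proof -
  have rows: "{i. i < dim_row X \<and> i \<in> I} = I" and cols: "{j. j < dim_col X \<and> j \<in> J} = J"
    using X I J by auto
  show ?thesis by (rule submatrix_index) (unfold rows cols, fact+)
qed

lemma submatrix_eq_0_iff:
  assumes X: "X \<in> carrier_mat nr nc" and I: "I \<subseteq> {0..<nr}" and J: "J \<subseteq> {0..<nc}"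
  shows "submatrix X I J = 0\<^sub>m (card I) (card J) \<longleftrightarrow> (\<forall>i\<in>I. \<forall>j\<in>J. X $$ (i, j) = 0)"
proof
  assume zero: "submatrix X I J = 0\<^sub>m (card I) (card J)"
  show "\<forall>i\<in>I. \<forall>j\<in>J. X $$ (i, j) = 0"
  proof (intro ballI)
    fix i j assume "i \<in> I" "j \<in> J"
    moreover have "finite I" "finite J" using finite_subset[OF I] finite_subset[OF J] by simp_all
    ultimately have "i \<in> pick I ` {..<card I}" "j \<in> pick J ` {..<card J}"
      using bij_betw_imp_surj_on[OF bij_betw_pick[of I]] bij_betw_imp_surj_on[OF bij_betw_pick[of J]]
      by simp_all
    then obtain s t where st: "s < card I" "t < card J" and "i = pick I s" "j = pick J t"
      by auto
    then show "X $$ (i, j) = 0" using zero submatrix_index_pick[OF X I J st] st by simp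
  qed
next
  assume zero: "\<forall>i\<in>I. \<forall>j\<in>J. X $$ (i, j) = 0"
  show "submatrix X I J = 0\<^sub>m (card I) (card J)"
  proof (rule eq_matI)
    fix s t assume "s < dim_row (0\<^sub>m (card I) (card J) :: 'a mat)"
      "t < dim_col (0\<^sub>m (card I) (card J) :: 'a mat)"
    then have st: "s < card I" "t < card J" by simp_all
    then have "pick I s \<in> I" "pick J t \<in> J" by (simp_all add: pick_in_set_le)
    then show "submatrix X I J $$ (s, t) = 0\<^sub>m (card I) (card J) $$ (s, t)"
      using zero st submatrix_index_pick[OF X I J st] by simp
  qed (use submatrix_carrier_mat[OF X I J] in auto)
qed

lemma submatrix_one_mat_diag:
  assumes I: "I \<subseteq> {0..<n}"
  shows "submatrix (1\<^sub>m n) I I = (1\<^sub>m (card I) :: 'a::{zero,one} mat)"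
proof (rule eq_matI)
  fix i j assume "i < dim_row (1\<^sub>m (card I) :: 'a mat)" "j < dim_col (1\<^sub>m (card I) :: 'a mat)"
  then have ij: "i < card I" "j < card I" by auto
  then have "pick I i \<in> I" "pick I j \<in> I" by (simp_all add: pick_in_set_le)
  then have "pick I i < n" "pick I j < n" using I by auto
  moreover have "pick I i = pick I j \<longleftrightarrow> i = j"
    using ij by (metis nat_neq_iff pick_mono_le)
  ultimately show "submatrix (1\<^sub>m n) I I $$ (i, j) = (1\<^sub>m (card I) :: 'a mat) $$ (i, j)"
    using submatrix_index_pick[OF one_carrier_mat I I ij] ij by simp
qed (use submatrix_carrier_mat[OF one_carrier_mat I I] in auto)

lemma submatrix_one_mat_disjoint:
  assumes I: "I \<subseteq> {0..<n}" and J: "J \<subseteq> {0..<n}" and "I \<inter> J = {}"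
  shows "submatrix (1\<^sub>m n) I J = (0\<^sub>m (card I) (card J) :: 'a::{zero,one} mat)"
proof -
  have "1\<^sub>m n $$ (i, j) = (0 :: 'a)" if "i \<in> I" "j \<in> J" for i j
  proof -
    have "i < n" "j < n" "i \<noteq> j" using that assms by auto
    then show ?thesis by simp
  qed
  then show ?thesis by (simp add: submatrix_eq_0_iff[OF one_carrier_mat I J])
qed

lemma submatrix_mult_split:
  fixes X Y :: "'a::comm_ring_1 mat"
  assumes X: "X \<in> carrier_mat nr n" and Y: "Y \<in> carrier_mat n nc"
    and I: "I \<subseteq> {0..<nr}" and J: "J \<subseteq> {0..<nc}" and S: "S \<subseteq> {0..<n}"
  shows "submatrix (X * Y) I J = submatrix X I S * submatrix Y S J
     + submatrix X I ({0..<n} - S) * submatrix Y ({0..<n} - S) J"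
proof -
  let ?T = "{0..<n} - S"
  have T: "?T \<subseteq> {0..<n}" by auto
  have XY: "X * Y \<in> carrier_mat nr nc" using X Y by auto
  note carriers = submatrix_carrier_mat[OF X I S] submatrix_carrier_mat[OF Y S J]
    submatrix_carrier_mat[OF X I T] submatrix_carrier_mat[OF Y T J]
  show ?thesis
  proof (rule eq_matI)
    fix i j assume "i < dim_row (submatrix X I S * submatrix Y S J
      + submatrix X I ?T * submatrix Y ?T J)" "j < dim_col (submatrix X I S * submatrix Y S J
      + submatrix X I ?T * submatrix Y ?T J)"
    then have i: "i < card I" and j: "j < card J" using carriers by auto
    have "pick I i \<in> I" "pick J j \<in> J" using i j by (simp_all add: pick_in_set_le)
    then have pick_less: "pick I i < nr" "pick J j < nc" using I J by auto
    define f where "f k = X $$ (pick I i, k) * Y $$ (k, pick J j)" for k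
    have "(submatrix X I S * submatrix Y S J + submatrix X I ?T * submatrix Y ?T J) $$ (i, j)
      = (\<Sum>t\<in>{0..<card S}. f (pick S t)) + (\<Sum>t\<in>{0..<card ?T}. f (pick ?T t))"
      using carriers i j
      by (simp add: scalar_prod_def f_def submatrix_index_pick[OF X I S]
          submatrix_index_pick[OF Y S J] submatrix_index_pick[OF X I T] submatrix_index_pick[OF Y T J])
    also have "\<dots> = (\<Sum>k\<in>S. f k) + (\<Sum>k\<in>?T. f k)"
      using sum_pick[OF finite_subset[OF S], of f, folded atLeast0LessThan]
        sum_pick[of ?T f, folded atLeast0LessThan] by simp
    also have "\<dots> = (\<Sum>k\<in>{0..<n}. f k)"
      by (simp only: sum.subset_diff[OF S, of f] finite_atLeastLessThan add.commute)
    also have "\<dots> = submatrix (X * Y) I J $$ (i, j)"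
      using X Y pick_less submatrix_index_pick[OF XY I J i j] by (simp add: scalar_prod_def f_def)
    finally show "submatrix (X * Y) I J $$ (i, j) = (submatrix X I S * submatrix Y S J
      + submatrix X I ?T * submatrix Y ?T J) $$ (i, j)" by simp
  qed (use carriers submatrix_carrier_mat[OF XY I J] in auto)
qed

lemma zero_mult_mat_vec:
  "v \<in> carrier_vec nc \<Longrightarrow> 0\<^sub>m nr nc *\<^sub>v v = (0\<^sub>v nr :: 'a::semiring_0 vec)"
  by (intro eq_vecI) (auto simp: scalar_prod_def)

lemma add_mult_mat_vec_of_kernel:
  fixes X :: "'a::comm_ring_1 mat"
  assumes X: "X \<in> carrier_mat a b" and Y: "Y \<in> carrier_mat b c" and Z: "Z \<in> carrier_mat a d"
    and W: "W \<in> carrier_mat d c" and v: "v \<in> carrier_vec c" and Wv: "W *\<^sub>v v = 0\<^sub>v d"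
  shows "(X * Y + Z * W) *\<^sub>v v = X *\<^sub>v (Y *\<^sub>v v)"
proof -
  have "(X * Y + Z * W) *\<^sub>v v = (X * Y) *\<^sub>v v + (Z * W) *\<^sub>v v"
    using X Y Z W v by (intro add_mult_distrib_mat_vec) auto
  also have "\<dots> = X *\<^sub>v (Y *\<^sub>v v) + Z *\<^sub>v 0\<^sub>v d"
    using X Y Z W v Wv by simp
  also have "Z *\<^sub>v 0\<^sub>v d = 0\<^sub>v a"
    using Z by (intro eq_vecI) auto
  finally show ?thesis using X Y v by simp
qed

lemma kernel_dim_eq_if_inverse_maps:
  fixes A C :: "'a::field mat"
  assumes A: "A \<in> carrier_mat nr nc" and C: "C \<in> carrier_mat mr mc"
    and P: "P \<in> carrier_mat mc nc"
    and PK: "\<And>v. v \<in> mat_kernel A \<Longrightarrow> P *\<^sub>v v \<in> mat_kernel C"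
    and QK: "\<And>w. w \<in> mat_kernel C \<Longrightarrow> Q *\<^sub>v w \<in> mat_kernel A"
    and QP: "\<And>v. v \<in> mat_kernel A \<Longrightarrow> Q *\<^sub>v (P *\<^sub>v v) = v"
    and PQ: "\<And>w. w \<in> mat_kernel C \<Longrightarrow> P *\<^sub>v (Q *\<^sub>v w) = w"
  shows "kernel_dim A = kernel_dim C"
proof -
  interpret KA: kernel nr nc A by unfold_locales (rule A)
  interpret KC: kernel mr mc C by unfold_locales (rule C)
  have "(\<lambda>v. P *\<^sub>v v) \<in> LinearCombinations.module_hom class_ring KA.VK KC.VK"
    unfolding LinearCombinations.module_hom_def using PK mat_kernel_carrier[OF A] P
    by (auto simp: mult_mat_vec intro!: mult_add_distrib_mat_vec[OF P])
  then interpret L: linear_map class_ring KA.VK KC.VK "\<lambda>v. P *\<^sub>v v"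
    by unfold_locales
  obtain B where "finite B" "KA.basis B" using kernel_basis_exists[OF A] by auto
  then have "KA.Ker.fin_dim" unfolding KA.Ker.fin_dim_def KA.Ker.basis_def by auto
  moreover have "inj_on (\<lambda>v. P *\<^sub>v v) (mat_kernel A)"
    by (metis QP inj_onI)
  moreover have "(\<lambda>v. P *\<^sub>v v) ` mat_kernel A = mat_kernel C"
    using PK QK PQ by auto (metis image_eqI)
  ultimately have "KA.dim = KC.dim" using L.dim_eq by simp
  then show ?thesis by simp
qed

lemma kernel_dim_eq_dim_col_iff:
  fixes X :: "'a::field mat"
  assumes X: "X \<in> carrier_mat nr nc"
  shows "kernel_dim X = nc \<longleftrightarrow> X = 0\<^sub>m nr nc"
proof -
  obtain C where gj: "gauss_jordan_single X = C" by auto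
  note g = gauss_jordan_single[OF X gj]
  obtain P Q where PQ: "C = P * X" "P \<in> carrier_mat nr nr" "Q \<in> carrier_mat nr nr"
    "Q * P = 1\<^sub>m nr" using g(4) by auto
  let ?nonzero_rows = "{i. i < nr \<and> row C i \<noteq> 0\<^sub>v nc}"
  have dim: "kernel_dim X = nc - card ?nonzero_rows"
    using kernel_dim_code[of X] find_base_vectors(5)[OF g(3) g(2)] X gj by simp
  show ?thesis
  proof
    assume "X = 0\<^sub>m nr nc"
    then have "?nonzero_rows = {}" using PQ by auto
    then show "kernel_dim X = nc" using dim by (metis card.empty diff_zero)
  next
    assume "kernel_dim X = nc"
    show "X = 0\<^sub>m nr nc"
    proof (cases "nc = 0")
      case True
      then show ?thesis using X by (intro eq_matI) auto
    next
      case False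
      with \<open>kernel_dim X = nc\<close> dim have "card ?nonzero_rows = 0" by linarith
      then have "?nonzero_rows = {}" by simp
      have C0: "C = 0\<^sub>m nr nc"
      proof (rule eq_matI)
        fix i j assume ij: "i < dim_row (0\<^sub>m nr nc)" "j < dim_col (0\<^sub>m nr nc)"
        then have "row C i $ j = 0" using \<open>?nonzero_rows = {}\<close> by auto
        then show "C $$ (i, j) = 0\<^sub>m nr nc $$ (i, j)" using ij g(2) by auto
      qed (use g(2) in auto)
      have "X = (Q * P) * X" unfolding PQ(4) using X by simp
      also have "\<dots> = Q * C" unfolding PQ(1) by (rule assoc_mult_mat[OF PQ(3,2) X])
      also have "\<dots> = 0\<^sub>m nr nc" using C0 PQ by simp
      finally show ?thesis .
    qed
  qed
qed

lemma kernel_dim_eq_0_if_inverse: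
  fixes A :: "'a::field mat"
  assumes A: "A \<in> carrier_mat n n" and B: "B \<in> carrier_mat n n"
    and AB: "A * B = 1\<^sub>m n" and BA: "B * A = 1\<^sub>m n"
  shows "kernel_dim A = 0"
proof -
  have "mat_kernel A = mat_kernel (1\<^sub>m n)"
    using mat_kernel_mult_eq[OF A B A AB] unfolding BA by (rule sym)
  then have "kernel.dim n A = kernel.dim n (1\<^sub>m n :: 'a mat)" by simp
  then show ?thesis using A kernel_one_mat(1) by (simp add: kernel_dim_def)
qed

lemma kernel_dim_complementary_submatrix_inverse:
  fixes M B :: "'a::field mat"
  assumes M: "M \<in> carrier_mat n n" and B: "B \<in> carrier_mat n n"
    and MB: "M * B = 1\<^sub>m n" and BM: "B * M = 1\<^sub>m n" and a: "\<alpha> \<subseteq> {0..<n}"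
  shows "kernel_dim (submatrix M ({0..<n} - \<alpha>) ({0..<n} - \<alpha>)) = kernel_dim (submatrix B \<alpha> \<alpha>)"
proof -
  define \<beta> where "\<beta> = {0..<n} - \<alpha>"
  have b: "\<beta> \<subseteq> {0..<n}" and ab: "\<alpha> \<inter> \<beta> = {}" "\<beta> \<inter> \<alpha> = {}" and compl: "{0..<n} - \<beta> = \<alpha>"
    using a unfolding \<beta>_def by auto
  let ?Maa = "submatrix M \<alpha> \<alpha>" and ?Mab = "submatrix M \<alpha> \<beta>"
    and ?Mba = "submatrix M \<beta> \<alpha>" and ?Mbb = "submatrix M \<beta> \<beta>"
  let ?Baa = "submatrix B \<alpha> \<alpha>" and ?Bab = "submatrix B \<alpha> \<beta>"
    and ?Bba = "submatrix B \<beta> \<alpha>" and ?Bbb = "submatrix B \<beta> \<beta>"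
  note carriers = submatrix_carrier_mat[OF M a a] submatrix_carrier_mat[OF M a b]
    submatrix_carrier_mat[OF M b a] submatrix_carrier_mat[OF M b b]
    submatrix_carrier_mat[OF B a a] submatrix_carrier_mat[OF B a b]
    submatrix_carrier_mat[OF B b a] submatrix_carrier_mat[OF B b b]
  have BM_ab: "?Baa * ?Mab + ?Bab * ?Mbb = 0\<^sub>m (card \<alpha>) (card \<beta>)"
    using submatrix_mult_split[OF B M a b a, folded \<beta>_def, unfolded BM
        submatrix_one_mat_disjoint[OF a b ab(1)]] by (rule sym)
  have BM_bb: "?Bba * ?Mab + ?Bbb * ?Mbb = 1\<^sub>m (card \<beta>)"
    using submatrix_mult_split[OF B M b b a, folded \<beta>_def, unfolded BM
        submatrix_one_mat_diag[OF b]] by (rule sym)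
  have MB_ba: "?Mbb * ?Bba + ?Mba * ?Baa = 0\<^sub>m (card \<beta>) (card \<alpha>)"
    using submatrix_mult_split[OF M B b a b, unfolded compl MB
        submatrix_one_mat_disjoint[OF b a ab(2)]] by (rule sym)
  have MB_aa: "?Mab * ?Bba + ?Maa * ?Baa = 1\<^sub>m (card \<alpha>)"
    using submatrix_mult_split[OF M B a a b, unfolded compl MB
        submatrix_one_mat_diag[OF a]] by (rule sym)
  show ?thesis unfolding \<beta>_def[symmetric]
  proof (rule kernel_dim_eq_if_inverse_maps[OF carriers(4,5,2)])
    fix v assume "v \<in> mat_kernel ?Mbb"
    note v = mat_kernelD[OF carriers(4) this]
    have "?Baa *\<^sub>v (?Mab *\<^sub>v v) = (?Baa * ?Mab + ?Bab * ?Mbb) *\<^sub>v v"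
      by (rule add_mult_mat_vec_of_kernel[OF carriers(5,2,6,4) v, symmetric])
    also have "\<dots> = 0\<^sub>v (card \<alpha>)"
      unfolding BM_ab using v(1) by (rule zero_mult_mat_vec)
    finally show "?Mab *\<^sub>v v \<in> mat_kernel ?Baa"
      by (rule mat_kernelI[OF carriers(5) mult_mat_vec_carrier[OF carriers(2) v(1)]])
    have "?Bba *\<^sub>v (?Mab *\<^sub>v v) = (?Bba * ?Mab + ?Bbb * ?Mbb) *\<^sub>v v"
      by (rule add_mult_mat_vec_of_kernel[OF carriers(7,2,8,4) v, symmetric])
    also have "\<dots> = v"
      unfolding BM_bb using v(1) by (rule one_mult_mat_vec)
    finally show "?Bba *\<^sub>v (?Mab *\<^sub>v v) = v" .
  next
    fix w assume "w \<in> mat_kernel ?Baa"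
    note w = mat_kernelD[OF carriers(5) this]
    have "?Mbb *\<^sub>v (?Bba *\<^sub>v w) = (?Mbb * ?Bba + ?Mba * ?Baa) *\<^sub>v w"
      by (rule add_mult_mat_vec_of_kernel[OF carriers(4,7,3,5) w, symmetric])
    also have "\<dots> = 0\<^sub>v (card \<beta>)"
      unfolding MB_ba using w(1) by (rule zero_mult_mat_vec)
    finally show "?Bba *\<^sub>v w \<in> mat_kernel ?Mbb"
      by (rule mat_kernelI[OF carriers(4) mult_mat_vec_carrier[OF carriers(7) w(1)]])
    have "?Mab *\<^sub>v (?Bba *\<^sub>v w) = (?Mab * ?Bba + ?Maa * ?Baa) *\<^sub>v w"
      by (rule add_mult_mat_vec_of_kernel[OF carriers(2,7,1,5) w, symmetric])
    also have "\<dots> = w"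
      unfolding MB_aa using w(1) by (rule one_mult_mat_vec)
    finally show "?Mab *\<^sub>v (?Bba *\<^sub>v w) = w" .
  qed
qed

lemma is_P_set_iff_inverse_entries_0:
  assumes M: "M \<in> carrier_mat n n" and B: "B \<in> carrier_mat n n"
    and MB: "M * B = 1\<^sub>m n" and BM: "B * M = 1\<^sub>m n" and g: "\<gamma> \<subseteq> {0..<n}"
  shows "is_P_set M \<gamma> \<longleftrightarrow> (\<forall>i\<in>\<gamma>. \<forall>j\<in>\<gamma>. B $$ (i, j) = 0)"
proof -
  have "principal_del M \<gamma> = submatrix M ({0..<n} - \<gamma>) ({0..<n} - \<gamma>)"
    unfolding principal_del_def using M by simp
  then have "is_P_set M \<gamma> \<longleftrightarrow> kernel_dim (submatrix B \<gamma> \<gamma>) = card \<gamma>"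
    unfolding is_P_set_def nullity_def
    using kernel_dim_eq_0_if_inverse[OF M B MB BM]
      kernel_dim_complementary_submatrix_inverse[OF M B MB BM g] by simp
  also have "\<dots> \<longleftrightarrow> submatrix B \<gamma> \<gamma> = 0\<^sub>m (card \<gamma>) (card \<gamma>)"
    by (rule kernel_dim_eq_dim_col_iff[OF submatrix_carrier_mat[OF B g g]])
  also have "\<dots> \<longleftrightarrow> (\<forall>i\<in>\<gamma>. \<forall>j\<in>\<gamma>. B $$ (i, j) = 0)"
    by (rule submatrix_eq_0_iff[OF B g g])
  finally show ?thesis .
qed

lemma obtain_card_2_subset_containing:
  assumes "card A \<ge> 2" "i \<in> A" "j \<in> A"
  obtains \<gamma> where "\<gamma> \<subseteq> A" "card \<gamma> = 2" "i \<in> \<gamma>" "j \<in> \<gamma>"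
proof (cases "i = j")
  case False
  then show ?thesis using that[of "{i, j}"] assms by auto
next
  case True
  have "\<not> A \<subseteq> {i}"
    using card_mono[of "{i}" A] assms(1) by auto
  then obtain l where "l \<in> A" "l \<noteq> i" by auto
  then show ?thesis using that[of "{i, l}"] assms True by auto
qed

theorem theorem2p4:
  fixes M :: "real mat" and n :: nat and \<alpha> :: "nat set"
  assumes "M \<in> carrier_mat n n"
    and "transpose_mat M = M"
    and "det M \<noteq> 0"
    and "\<alpha> \<subseteq> {0..<n}"
    and "card \<alpha> \<ge> 2"
    and "\<forall>\<gamma>. \<gamma> \<subseteq> \<alpha> \<and> card \<gamma> = 2 \<longrightarrow> is_P_set M \<gamma>"
  shows "is_P_set M \<alpha>"
proof -
  note M = assms(1) and a = assms(4)
  obtain B where B: "B \<in> carrier_mat n n" and BM: "B * M = 1\<^sub>m n" and MB: "M * B = 1\<^sub>m n"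
    using det_non_zero_imp_unit[OF M assms(3), unfolded Units_def, of "()"]
    by (auto simp: ring_mat_def)
  have "B $$ (i, j) = 0" if ij: "i \<in> \<alpha>" "j \<in> \<alpha>" for i j
  proof -
    obtain \<gamma> where g: "\<gamma> \<subseteq> \<alpha>" "card \<gamma> = 2" "i \<in> \<gamma>" "j \<in> \<gamma>"
      by (rule obtain_card_2_subset_containing[OF assms(5) ij])
    then have "is_P_set M \<gamma>" using assms(6) by blast
    then show ?thesis
      using is_P_set_iff_inverse_entries_0[OF M B MB BM order.trans[OF g(1) a]] g(3,4) by blast
  qed
  then show ?thesis using is_P_set_iff_inverse_entries_0[OF M B MB BM a] by blast
qed

end
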